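(* There exists a constant $C$, independent of $h$, of the interface element and of the interface location, such that for every interface element $T\in\mathcal T_h^i$, every $p\in\mathbb Q_1$ and every point $X_0\in\tau_{\omega_T}$, $$|p(X_0)|\le C h^{-1}\|p\|_{L^2(\tau_{\omega_T})}.$$
   Context: $\mathbb Q_1$ is the space of trilinear polynomials. $\Gamma$ is a closed $C^2$ surface separating a bounded domain $\Omega\subset\mathbb R^3$ (a union of finitely many rectangular parallelepipeds) into $\Omega^\pm$, with reach $r_\Gamma$ (largest $r$ such that normal segments of length $2r$ centered at distinct points of $\Gamma$ are disjoint). $\mathcal T_h$ is a Cartesian mesh of $\Omega$ by cubes of edge length $h$ with $h<r_\Gamma/(3\sqrt3)$, $\Gamma$ meeting each mesh edge in at most one point and the boundary of each mesh face in at most two points, and no vertex on $\Gamma$. $\mathcal T_h^i$ is the set of elements meeting $\Gamma$; $\omega_T$ is the union of elements $T'$ with $\overline{T'}\cap\overline T\ne\emptyset$. For $T\in\mathcal T_h^i$, $\tau(T)$ is the plane through three points where $\Gamma$ meets edges of $T$, selected as: if $\Gamma$ cuts 3 faces, all three; if $\Gamma$ cuts 4 faces separating the endpoints of an edge $e$ from the other vertices, the three farthest from $e$; if the four points lie on four parallel edges, any three; if $\Gamma$ cuts 5 faces, the three on parallel edges; if $\Gamma$ cuts 6 faces, every other one of the six (on three mutually orthogonal edges). $\tau_{\omega_T}=\omega_T\cap\tau(T)$. *)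

theory Defs
  imports "HOL-Analysis.Analysis"
begin

definition trilinear :: "(real^3 \<Rightarrow> real) \<Rightarrow> bool" where
  "trilinear p \<longleftrightarrow> (\<exists>c :: nat \<Rightarrow> nat \<Rightarrow> nat \<Rightarrow> real. \<forall>x.
     p x = (\<Sum>i\<le>1. \<Sum>j\<le>1. \<Sum>k\<le>1. c i j k * (x$1)^i * (x$2)^j * (x$3)^k))"

definition C2_chart :: "(real^3) set \<Rightarrow> (real^3) set \<Rightarrow> (real^3 \<Rightarrow> real) \<Rightarrow> (real^3 \<Rightarrow> real^3) \<Rightarrow> bool" where
  "C2_chart \<Gamma> U \<phi> g \<longleftrightarrow> open U \<and>
     (\<exists>H :: real^3 \<Rightarrow> real^3^3.
        (\<forall>y\<in>U. (\<phi> has_derivative (\<lambda>v. g y \<bullet> v)) (at y)) \<and>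
        (\<forall>y\<in>U. (g has_derivative (\<lambda>v. H y *v v)) (at y)) \<and>
        continuous_on U H) \<and>
     (\<forall>y\<in>U. g y \<noteq> 0) \<and>
     \<Gamma> \<inter> U = {y\<in>U. \<phi> y = 0}"

definition closed_C2_surface :: "(real^3) set \<Rightarrow> bool" where
  "closed_C2_surface \<Gamma> \<longleftrightarrow> compact \<Gamma> \<and> \<Gamma> \<noteq> {} \<and>
     (\<forall>x\<in>\<Gamma>. \<exists>U \<phi> g. x \<in> U \<and> C2_chart \<Gamma> U \<phi> g)"

definition unit_normal :: "(real^3) set \<Rightarrow> real^3 \<Rightarrow> real^3 \<Rightarrow> bool" where
  "unit_normal \<Gamma> x n \<longleftrightarrow>
     (\<exists>U \<phi> g. x \<in> U \<and> C2_chart \<Gamma> U \<phi> g \<and> n = inverse (norm (g x)) *\<^sub>R g x)"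

definition normal_segments_disjoint :: "(real^3) set \<Rightarrow> real \<Rightarrow> bool" where
  "normal_segments_disjoint \<Gamma> r \<longleftrightarrow>
     (\<forall>x y n m. x \<in> \<Gamma> \<and> y \<in> \<Gamma> \<and> x \<noteq> y \<and> unit_normal \<Gamma> x n \<and> unit_normal \<Gamma> y m \<longrightarrow>
        closed_segment (x - r *\<^sub>R n) (x + r *\<^sub>R n) \<inter>
        closed_segment (y - r *\<^sub>R m) (y + r *\<^sub>R m) = {})"

definition reach :: "(real^3) set \<Rightarrow> real" where
  "reach \<Gamma> = Sup {r. 0 \<le> r \<and> normal_segments_disjoint \<Gamma> r}"

definition cartesian_mesh :: "(real^3) set \<Rightarrow> real \<Rightarrow> (real^3) set set \<Rightarrow> bool" where
  "cartesian_mesh \<Omega> h \<T> \<longleftrightarrow> 0 < h \<and> finite \<T> \<and>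
     (\<exists>a :: real^3. \<forall>T\<in>\<T>. \<exists>k :: int^3.
        T = cbox (a + h *\<^sub>R (\<chi> i. of_int (k$i))) (a + h *\<^sub>R (\<chi> i. of_int (k$i) + 1))) \<and>
     \<Union>\<T> = closure \<Omega>"

definition verts :: "(real^3) set \<Rightarrow> (real^3) set" where
  "verts T = {v. v extreme_point_of T}"

definition edges :: "(real^3) set \<Rightarrow> (real^3) set set" where
  "edges T = {E. E face_of T \<and> aff_dim E = 1}"

definition faces :: "(real^3) set \<Rightarrow> (real^3) set set" where
  "faces T = {F. F face_of T \<and> aff_dim F = 2}"

definition edge_parallel :: "(real^3) set \<Rightarrow> 3 \<Rightarrow> bool" where
  "edge_parallel E i \<longleftrightarrow> (\<exists>a b. E = closed_segment a b \<and> a \<noteq> b \<and> (\<forall>j. j \<noteq> i \<longrightarrow> a$j = b$j))"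

definition cut_pts :: "(real^3) set \<Rightarrow> (real^3) set \<Rightarrow> (real^3) set" where
  "cut_pts \<Gamma> T = \<Gamma> \<inter> \<Union>(edges T)"

definition n_cut_faces :: "(real^3) set \<Rightarrow> (real^3) set \<Rightarrow> nat" where
  "n_cut_faces \<Gamma> T = card {F\<in>faces T. \<Gamma> \<inter> rel_frontier F \<noteq> {}}"

text \<open>S is an admissible choice of the three points defining the plane tau(T).\<close>
definition tau_selection :: "(real^3) set \<Rightarrow> (real^3) set \<Rightarrow> (real^3) set \<Rightarrow> bool" where
  "tau_selection \<Gamma> T S \<longleftrightarrow> S \<subseteq> cut_pts \<Gamma> T \<and> card S = 3 \<and>
    ((n_cut_faces \<Gamma> T = 3 \<and> S = cut_pts \<Gamma> T)
   \<or> (n_cut_faces \<Gamma> T = 4 \<and>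
        (\<exists>e\<in>edges T. (\<forall>E\<in>edges T. (\<Gamma> \<inter> E \<noteq> {}) \<longleftrightarrow> (E \<noteq> e \<and> E \<inter> e \<noteq> {})) \<and>
           (\<forall>q\<in>S. \<forall>q'\<in>cut_pts \<Gamma> T - S. infdist q' e \<le> infdist q e)))
   \<or> (n_cut_faces \<Gamma> T = 4 \<and> (\<exists>i. \<forall>E\<in>edges T. \<Gamma> \<inter> E \<noteq> {} \<longrightarrow> edge_parallel E i))
   \<or> (n_cut_faces \<Gamma> T = 5 \<and> (\<exists>i. \<forall>q\<in>S. \<exists>E\<in>edges T. q \<in> E \<and> edge_parallel E i))
   \<or> (n_cut_faces \<Gamma> T = 6 \<and>
        (\<forall>i. \<exists>q\<in>S. \<exists>E\<in>edges T. q \<in> E \<and> edge_parallel E i) \<and>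
        (\<forall>q\<in>S. \<forall>q'\<in>S. q \<noteq> q' \<longrightarrow> \<not> (\<exists>F\<in>faces T. q \<in> F \<and> q' \<in> F))))"

definition omega :: "(real^3) set set \<Rightarrow> (real^3) set \<Rightarrow> (real^3) set" where
  "omega \<T> T = \<Union>{T'\<in>\<T>. T' \<inter> T \<noteq> {}}"

text \<open>L2 norm over a subset A of a plane, w.r.t. the planar (2D surface) measure,
  computed via the isometric parametrisation (s,t) |-> q + s u + t v.\<close>
definition plane_L2_norm :: "(real^3) set \<Rightarrow> (real^3 \<Rightarrow> real) \<Rightarrow> real^3 \<Rightarrow> real^3 \<Rightarrow> real^3 \<Rightarrow> real" where
  "plane_L2_norm A p q u v = sqrt (enn2real (\<integral>\<^sup>+ z. ennreal
      (indicator A (q + fst z *\<^sub>R u + snd z *\<^sub>R v) * (p (q + fst z *\<^sub>R u + snd z *\<^sub>R v))\<^sup>2)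
      \<partial>(lborel :: (real \<times> real) measure)))"

end

theory Submission
  imports Defs "HOL-Computational_Algebra.Polynomial"
begin

(* The plane \<tau>(T) passes through a point P of \<Gamma> on an edge of T, and P is interior to \<Omega>, so every
  lattice cube around P belongs to the mesh. Inside the plane, moving from P towards the middle of
  the slab of T transversal to that edge, one finds a square of side h/4 (in orthonormal plane
  coordinates) contained in \<omega>_T, and every point of \<tau>_\<omega>_T lies within 25 side lengths of it.
  On the plane, p is a cubic in each coordinate separately. For a cubic g and |x - l| \<le> K a,
  expanding g in the shifted Legendre basis gives g(x)^2 \<le> C(K)/a \<integral>_[l,l+a] g^2; applying this in
  both coordinates (Fubini) bounds |p(X0)| by C/h times the L2 norm of p over the square. *)

lemma poly_eq_cubic:
  fixes P :: "real poly"
  assumes "degree P \<le> 3"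
  shows "poly P y = coeff P 0 + coeff P 1 * y + coeff P 2 * y^2 + coeff P 3 * y^3"
proof -
  have "poly P y = (\<Sum>i\<le>3. coeff P i * y ^ i)"
    unfolding poly_altdef using assms by (intro sum.mono_neutral_left) (auto simp: coeff_eq_0)
  then show ?thesis
    by (simp add: numeral_3_eq_3 numeral_2_eq_2 atMost_Suc)
qed

lemma abs_cubic_le:
  fixes a0 a1 a2 a3 w K :: real
  assumes "\<bar>w\<bar> \<le> K"
  shows "\<bar>a0 + a1*w + a2*w^2 + a3*w^3\<bar> \<le> \<bar>a0\<bar> + \<bar>a1\<bar>*K + \<bar>a2\<bar>*K^2 + \<bar>a3\<bar>*K^3"
proof -
  have "\<bar>a*w^n\<bar> \<le> \<bar>a\<bar>*K^n" for a n
    unfolding abs_mult power_abs by (intro mult_left_mono power_mono) (use assms in auto)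
  from this[of a1 1] this[of a2 2] this[of a3 3] show ?thesis
    using abs_ge_self[of a0] abs_ge_minus_self[of a0]
    by (simp only: abs_le_iff power_one_right) linarith
qed

definition cubic_sq_integral :: "real \<Rightarrow> real \<Rightarrow> real \<Rightarrow> real \<Rightarrow> real" where
  "cubic_sq_integral e0 e1 e2 e3 = e0^2 + e0*e1 + (e1^2 + 2*e0*e2)/3 + (e0*e3 + e1*e2)/2
     + (e2^2 + 2*e1*e3)/5 + e2*e3/3 + e3^2/7"

lemma has_integral_cubic_sq:
  "((\<lambda>w. (e0 + e1*w + e2*w^2 + e3*w^3)^2) has_integral cubic_sq_integral e0 e1 e2 e3) {0..1::real}"
proof -
  define F where "F w = e0^2*w + e0*e1*w^2 + (e1^2 + 2*e0*e2)/3*w^3 + (e0*e3 + e1*e2)/2*w^4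
     + (e2^2 + 2*e1*e3)/5*w^5 + e2*e3/3*w^6 + e3^2/7*w^7" for w :: real
  have "(F has_real_derivative (e0 + e1*w + e2*w^2 + e3*w^3)^2) (at w)" for w
  proof -
    have "(F has_real_derivative e0^2 + e0*e1*(2*w) + (e1^2 + 2*e0*e2)/3*(3*w^2)
       + (e0*e3 + e1*e2)/2*(4*w^3) + (e2^2 + 2*e1*e3)/5*(5*w^4) + e2*e3/3*(6*w^5) + e3^2/7*(7*w^6)) (at w)"
      unfolding F_def by (rule derivative_eq_intros refl | simp)+
    moreover have "e0^2 + e0*e1*(2*w) + (e1^2 + 2*e0*e2)/3*(3*w^2) + (e0*e3 + e1*e2)/2*(4*w^3)
        + (e2^2 + 2*e1*e3)/5*(5*w^4) + e2*e3/3*(6*w^5) + e3^2/7*(7*w^6) = (e0 + e1*w + e2*w^2 + e3*w^3)^2"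
      by (simp add: power2_eq_square power_numeral_reduce field_simps)
    ultimately show ?thesis
      by simp
  qed
  then have "((\<lambda>w. (e0 + e1*w + e2*w^2 + e3*w^3)^2) has_integral F 1 - F 0) {0..1}"
    by (intro fundamental_theorem_of_calculus)
       (auto simp: has_real_derivative_iff_has_vector_derivative[symmetric] intro: has_field_derivative_at_within)
  then show ?thesis by (simp add: F_def cubic_sq_integral_def)
qed

lemma square_sum4_le: "((a::real) + b + c + d)^2 \<le> 4 * (a^2 + b^2 + c^2 + d^2)"
proof -
  have "4 * (a^2 + b^2 + c^2 + d^2) - (a + b + c + d)^2
      = (a-b)^2 + (a-c)^2 + (a-d)^2 + (b-c)^2 + (b-d)^2 + (c-d)^2"
    by (simp add: power2_eq_square algebra_simps)
  moreover have "0 \<le> (a-b)^2 + (a-c)^2 + (a-d)^2 + (b-c)^2 + (b-d)^2 + (c-d)^2"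
    by simp
  ultimately show ?thesis
    by linarith
qed

definition cubic_inverse_const :: "real \<Rightarrow> real" where
  "cubic_inverse_const K = 28 * (1 + (2*K+1)^2 + (6*K^2+6*K+1)^2 + (20*K^3+30*K^2+12*K+1)^2)"

lemma cubic_inverse_const_pos: "0 < cubic_inverse_const K"
  unfolding cubic_inverse_const_def by (simp add: add_pos_nonneg)

lemma cubic_sq_le_integral:
  fixes e0 e1 e2 e3 w K :: real
  assumes w: "\<bar>w\<bar> \<le> K"
  shows "(e0 + e1*w + e2*w^2 + e3*w^3)^2 \<le> cubic_inverse_const K * cubic_sq_integral e0 e1 e2 e3"
proof -
  \<comment> \<open>coordinates in the shifted Legendre basis 1, P1, P2, P3, orthogonal on [0,1] with
     squared norms 1, 1/3, 1/5, 1/7\<close>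
  define c3 where "c3 = e3/20"
  define c2 where "c2 = (e2 + 30*c3)/6"
  define c1 where "c1 = (e1 - 12*c3 + 6*c2)/2"
  define c0 where "c0 = e0 + c1 - c2 + c3"
  define P1 where "P1 = 2*w - 1"
  define P2 where "P2 = 6*w^2 - 6*w + 1"
  define P3 where "P3 = 20*w^3 - 30*w^2 + 12*w - 1"
  define I where "I = cubic_sq_integral e0 e1 e2 e3"
  have expansion: "e0 + e1*w + e2*w^2 + e3*w^3 = c0 + c1*P1 + c2*P2 + c3*P3"
    unfolding c0_def c1_def c2_def c3_def P1_def P2_def P3_def by (simp add: field_simps)
  have parseval: "I = c0^2 + c1^2/3 + c2^2/5 + c3^2/7"
    unfolding I_def cubic_sq_integral_def c0_def c1_def c2_def c3_def
    by (simp add: field_simps power2_eq_square)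
  have "\<bar>P1\<bar> \<le> 2*K + 1" "\<bar>P2\<bar> \<le> 6*K^2 + 6*K + 1" "\<bar>P3\<bar> \<le> 20*K^3 + 30*K^2 + 12*K + 1"
    using abs_cubic_le[OF w, of "-1" 2 0 0] abs_cubic_le[OF w, of 1 "-6" 6 0]
      abs_cubic_le[OF w, of "-1" 12 "-30" 20]
    by (simp_all add: P1_def P2_def P3_def algebra_simps)
  then have P_sq: "P1^2 \<le> (2*K + 1)^2" "P2^2 \<le> (6*K^2 + 6*K + 1)^2"
      "P3^2 \<le> (20*K^3 + 30*K^2 + 12*K + 1)^2"
    by (metis abs_ge_zero power2_abs power_mono)+
  have c_sq: "c0^2 \<le> 7*I" "c1^2 \<le> 7*I" "c2^2 \<le> 7*I" "c3^2 \<le> 7*I" and "0 \<le> I"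
    using parseval zero_le_power2[of c0] zero_le_power2[of c1] zero_le_power2[of c2]
      zero_le_power2[of c3] by linarith+
  have "(c0 + c1*P1 + c2*P2 + c3*P3)^2 \<le> 4 * (c0^2 + (c1*P1)^2 + (c2*P2)^2 + (c3*P3)^2)"
    by (rule square_sum4_le)
  also have "\<dots> \<le> 4 * (7*I + 7*I*(2*K + 1)^2 + 7*I*(6*K^2 + 6*K + 1)^2
      + 7*I*(20*K^3 + 30*K^2 + 12*K + 1)^2)"
    unfolding power_mult_distrib using c_sq P_sq \<open>0 \<le> I\<close>
    by (intro mult_left_mono add_mono mult_mono) auto
  also have "\<dots> = cubic_inverse_const K * I"
    unfolding cubic_inverse_const_def by (simp add: algebra_simps)
  finally show ?thesis
    using expansion I_def by simp
qed

lemma poly_sq_le_interval_nn_integral: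
  fixes P :: "real poly"
  assumes deg: "degree P \<le> 3" and a: "0 < a" and x: "\<bar>x - l\<bar> \<le> K * a"
  shows "ennreal ((poly P x)^2)
    \<le> ennreal (cubic_inverse_const K / a)
      * (\<integral>\<^sup>+ y. ennreal (indicator {l..l+a} y * (poly P y)^2) \<partial>lborel)"
proof -
  define Q where "Q = P \<circ>\<^sub>p [:l, a:]"
  define e0 e1 e2 e3 where "e0 = coeff Q 0" and "e1 = coeff Q 1" and "e2 = coeff Q 2" and "e3 = coeff Q 3"
  define I where "I = cubic_sq_integral e0 e1 e2 e3"
  have "degree Q \<le> 3"
    unfolding Q_def using degree_pcompose_le[of P "[:l, a:]"] deg a by simp
  then have Q_eq: "poly Q w = e0 + e1*w + e2*w^2 + e3*w^3" for w
    unfolding e0_def e1_def e2_def e3_def by (rule poly_eq_cubic)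
  have P_eq: "poly P (l + a*w) = poly Q w" for w
    by (simp add: Q_def poly_pcompose mult.commute)
  have "\<bar>(x - l)/a\<bar> \<le> K"
    using x a by (simp add: divide_le_eq)
  from cubic_sq_le_integral[OF this, of e0 e1 e2 e3]
  have pointwise: "(poly P x)^2 \<le> cubic_inverse_const K * I"
    using P_eq[of "(x - l)/a"] Q_eq a by (simp add: I_def)
  have [measurable]: "poly P \<in> borel_measurable borel"
    by (intro borel_measurable_continuous_onI continuous_intros)
  have "(\<lambda>y. ennreal (indicator {l..l+a} y * (poly P y)^2)) \<in> borel_measurable borel"
    by measurable
  from nn_integral_real_affine[OF this, of a l]
  have "(\<integral>\<^sup>+ y. ennreal (indicator {l..l+a} y * (poly P y)^2) \<partial>lborel)
      = a * (\<integral>\<^sup>+ w. ennreal (indicator {l..l+a} (l + a*w) * (poly P (l + a*w))^2) \<partial>lborel)"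
    using a by simp
  also have "\<dots> = a * (\<integral>\<^sup>+ w. ennreal (indicator {0..1} w * (e0 + e1*w + e2*w^2 + e3*w^3)^2) \<partial>lborel)"
    using a by (simp add: P_eq Q_eq indicator_def zero_le_mult_iff)
  also have "\<dots> = ennreal (a * I)"
    unfolding I_def using a
    by (subst nn_integral_has_integral_lebesgue[OF _ has_integral_cubic_sq]) (simp_all add: ennreal_mult')
  finally have integral: "(\<integral>\<^sup>+ y. ennreal (indicator {l..l+a} y * (poly P y)^2) \<partial>lborel) = ennreal (a * I)" .
  have "ennreal (cubic_inverse_const K / a) * ennreal (a * I) = ennreal (cubic_inverse_const K * I)"
    using a cubic_inverse_const_pos[of K] by (simp add: ennreal_mult'[symmetric])
  then show ?thesis
    unfolding integral using pointwise by (simp add: ennreal_leI)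
qed

lemma trilinear_along_line:
  assumes "trilinear p"
  shows "\<exists>P. degree P \<le> 3 \<and> (\<forall>s. p (x0 + s *\<^sub>R d) = poly P s)"
proof -
  obtain c where c: "\<And>x. p x = (\<Sum>i\<le>1. \<Sum>j\<le>1. \<Sum>k\<le>1. c i j k * (x$1)^i * (x$2)^j * (x$3)^k)"
    using assms unfolding trilinear_def by blast
  define P where "P = (\<Sum>i\<le>1. \<Sum>j\<le>1. \<Sum>k\<le>1.
    [:c i j k:] * [:x0$1, d$1:]^i * [:x0$2, d$2:]^j * [:x0$3, d$3:]^k)"
  have "degree ([:c i j k:] * [:x0$1, d$1:]^i * [:x0$2, d$2:]^j * [:x0$3, d$3:]^k) \<le> 3"
    if "i \<le> 1" "j \<le> 1" "k \<le> 1" for i j k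
  proof -
    have "degree ([:c i j k:] * [:x0$1, d$1:]^i * [:x0$2, d$2:]^j * [:x0$3, d$3:]^k) \<le> 0 + i + j + k"
      by (intro order.trans[OF degree_mult_le] add_mono order.trans[OF degree_power_le]) auto
    then show ?thesis
      using that by linarith
  qed
  then have "degree P \<le> 3"
    unfolding P_def by (intro degree_sum_le finite_atMost) simp_all
  moreover have "p (x0 + s *\<^sub>R d) = poly P s" for s
    unfolding P_def c by (simp add: poly_sum algebra_simps)
  ultimately show ?thesis
    by auto
qed

lemma continuous_on_trilinear:
  assumes "trilinear p"
  shows "continuous_on UNIV p"
proof -
  obtain c where "\<And>x. p x = (\<Sum>i\<le>1. \<Sum>j\<le>1. \<Sum>k\<le>1. c i j k * (x$1)^i * (x$2)^j * (x$3)^k)"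
    using assms unfolding trilinear_def by blast
  then have "p = (\<lambda>x. \<Sum>i\<le>1. \<Sum>j\<le>1. \<Sum>k\<le>1. c i j k * (x$1)^i * (x$2)^j * (x$3)^k)"
    by blast
  then show ?thesis
    by (simp only:) (intro continuous_intros)
qed

lemma separately_cubic_sq_le_square_nn_integral:
  fixes F :: "real \<Rightarrow> real \<Rightarrow> real"
  assumes cubic_fst: "\<And>t. \<exists>P. degree P \<le> 3 \<and> (\<forall>s. F s t = poly P s)"
    and cubic_snd: "\<And>s. \<exists>P. degree P \<le> 3 \<and> (\<forall>t. F s t = poly P t)"
    and cont: "continuous_on UNIV (\<lambda>z. F (fst z) (snd z))"
    and a: "0 < a" and s0: "\<bar>s0 - ls\<bar> \<le> K * a" and t0: "\<bar>t0 - lt\<bar> \<le> K * a"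
  shows "ennreal ((F s0 t0)^2)
    \<le> ennreal (cubic_inverse_const K / a) * ennreal (cubic_inverse_const K / a) *
    (\<integral>\<^sup>+ z. ennreal (indicator ({ls..ls+a} \<times> {lt..lt+a}) z * (F (fst z) (snd z))^2) \<partial>lborel)"
proof -
  define c where "c = ennreal (cubic_inverse_const K / a)"
  define g where "g z = ennreal (indicator ({ls..ls+a} \<times> {lt..lt+a}) z * (F (fst z) (snd z))^2)" for z
  have g_measurable: "g \<in> borel_measurable (lborel \<Otimes>\<^sub>M lborel)"
    unfolding lborel_prod g_def measurable_lborel2
    by (intro measurable_compose[OF _ measurable_ennreal] borel_measurable_times
        borel_measurable_indicator borel_measurable_power borel_measurable_continuous_onI cont)
       (auto intro!: borel_closed closed_Times)
  have along_fst: "ennreal ((F s0 t0)^2) \<le> c * (\<integral>\<^sup>+ s. ennreal (indicator {ls..ls+a} s * (F s t0)^2) \<partial>lborel)"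
  proof -
    obtain P where "degree P \<le> 3" "\<forall>s. F s t0 = poly P s"
      using cubic_fst by blast
    with poly_sq_le_interval_nn_integral[OF _ a s0] show ?thesis
      unfolding c_def by simp
  qed
  have along_snd: "ennreal (indicator {ls..ls+a} s * (F s t0)^2) \<le> c * (\<integral>\<^sup>+ t. g (s, t) \<partial>lborel)" for s
  proof (cases "s \<in> {ls..ls+a}")
    case True
    obtain P where "degree P \<le> 3" "\<forall>t. F s t = poly P t"
      using cubic_snd by blast
    with poly_sq_le_interval_nn_integral[OF _ a t0]
    have "ennreal ((F s t0)^2) \<le> c * (\<integral>\<^sup>+ t. ennreal (indicator {lt..lt+a} t * (F s t)^2) \<partial>lborel)"
      unfolding c_def by simp
    moreover have "g (s, t) = ennreal (indicator {lt..lt+a} t * (F s t)^2)" for t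
      using True by (simp add: g_def indicator_def)
    ultimately show ?thesis
      using True by simp
  qed simp
  have "ennreal ((F s0 t0)^2) \<le> c * (\<integral>\<^sup>+ s. c * (\<integral>\<^sup>+ t. g (s, t) \<partial>lborel) \<partial>lborel)"
    using along_fst along_snd by (meson order.trans mult_left_mono nn_integral_mono zero_le)
  also have "\<dots> = c * c * (\<integral>\<^sup>+ s. (\<integral>\<^sup>+ t. g (s, t) \<partial>lborel) \<partial>lborel)"
    using nn_integral_cmult[OF lborel.borel_measurable_nn_integral_fst[OF g_measurable], of c]
    by (simp add: mult.assoc)
  also have "(\<integral>\<^sup>+ s. (\<integral>\<^sup>+ t. g (s, t) \<partial>lborel) \<partial>lborel) = integral\<^sup>N lborel g"
    using lborel.nn_integral_fst[OF g_measurable] by (simp add: lborel_prod)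
  finally show ?thesis
    unfolding c_def g_def .
qed

lemma orthonormal_coords:
  fixes u v :: "'a::real_inner"
  assumes "norm u = 1" "norm v = 1" "u \<bullet> v = 0"
  shows "(s *\<^sub>R u + t *\<^sub>R v) \<bullet> u = s" "(s *\<^sub>R u + t *\<^sub>R v) \<bullet> v = t"
  using assms by (simp_all add: inner_add_left inner_commute[of v u] norm_eq_1)

lemma plane_nn_integral_finite:
  fixes p :: "real^3 \<Rightarrow> real"
  assumes A: "bounded A" and p: "continuous_on UNIV p"
    and uv: "norm u = 1" "norm v = 1" "u \<bullet> v = 0"
  shows "(\<integral>\<^sup>+ z. ennreal (indicator A (q + fst z *\<^sub>R u + snd z *\<^sub>R v)
    * (p (q + fst z *\<^sub>R u + snd z *\<^sub>R v))^2) \<partial>lborel) < \<infinity>"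
proof -
  obtain R0 where "\<And>y. y \<in> A \<Longrightarrow> norm y \<le> R0"
    using A by (auto simp: bounded_iff)
  then obtain R where R: "\<And>y. y \<in> A \<Longrightarrow> norm (y - q) \<le> R"
    by (meson add_mono norm_triangle_ineq4 order.trans order_refl)
  have "compact (p ` closure A)"
    using A p by (intro compact_continuous_image) (auto intro: continuous_on_subset)
  then obtain B where B: "\<And>y. y \<in> A \<Longrightarrow> \<bar>p y\<bar> \<le> B"
    using closure_subset by (fastforce dest!: compact_imp_bounded simp: bounded_iff)
  define Box where "Box = {-R..R} \<times> {-R..R}"
  have "ennreal (indicator A (q + fst z *\<^sub>R u + snd z *\<^sub>R v) * (p (q + fst z *\<^sub>R u + snd z *\<^sub>R v))^2)
      \<le> ennreal (B^2) * indicator Box z" for z :: "real \<times> real"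
  proof (cases "q + fst z *\<^sub>R u + snd z *\<^sub>R v \<in> A")
    case True
    define y where "y = q + fst z *\<^sub>R u + snd z *\<^sub>R v"
    have "y \<in> A"
      using True by (simp add: y_def)
    have "fst z = (y - q) \<bullet> u" "snd z = (y - q) \<bullet> v"
      using orthonormal_coords[OF uv] by (simp_all add: y_def)
    moreover have "\<bar>(y - q) \<bullet> w\<bar> \<le> R" if "norm w = 1" for w
      using Cauchy_Schwarz_ineq2[of "y - q" w] R[OF \<open>y \<in> A\<close>] that by simp
    ultimately have "\<bar>fst z\<bar> \<le> R" "\<bar>snd z\<bar> \<le> R"
      using uv by simp_all
    then have "z \<in> Box"
      by (cases z) (auto simp: Box_def abs_le_iff)
    moreover have "(p y)^2 \<le> B^2"
      using power_mono[OF B[OF \<open>y \<in> A\<close>] abs_ge_zero, of 2] by simp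
    ultimately show ?thesis
      using True by (simp add: y_def[symmetric] ennreal_leI)
  qed simp
  then have "(\<integral>\<^sup>+ z. ennreal (indicator A (q + fst z *\<^sub>R u + snd z *\<^sub>R v)
      * (p (q + fst z *\<^sub>R u + snd z *\<^sub>R v))^2) \<partial>lborel) \<le> ennreal (B^2) * emeasure lborel Box"
    by (subst nn_integral_cmult_indicator[symmetric])
      (auto intro!: nn_integral_mono borel_closed closed_Times simp: Box_def)
  also have "\<dots> < \<infinity>"
    using emeasure_bounded_finite[of Box] by (simp add: Box_def bounded_Times ennreal_mult_less_top)
  finally show ?thesis .
qed

lemma trilinear_abs_le_plane_L2_norm:
  fixes p :: "real^3 \<Rightarrow> real"
  assumes tri: "trilinear p" and a: "0 < a" and A: "bounded A"
    and uv: "norm u = 1" "norm v = 1" "u \<bullet> v = 0"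
    and s0: "\<bar>s0 - ls\<bar> \<le> K * a" and t0: "\<bar>t0 - lt\<bar> \<le> K * a"
    and square: "\<And>s t. s \<in> {ls..ls+a} \<Longrightarrow> t \<in> {lt..lt+a} \<Longrightarrow> q + s *\<^sub>R u + t *\<^sub>R v \<in> A"
  shows "\<bar>p (q + s0 *\<^sub>R u + t0 *\<^sub>R v)\<bar> \<le> cubic_inverse_const K / a * plane_L2_norm A p q u v"
proof -
  define F where "F s t = p (q + s *\<^sub>R u + t *\<^sub>R v)" for s t
  define I where "I = (\<integral>\<^sup>+ z. ennreal (indicator A (q + fst z *\<^sub>R u + snd z *\<^sub>R v)
    * (p (q + fst z *\<^sub>R u + snd z *\<^sub>R v))^2) \<partial>lborel)"
  define c where "c = cubic_inverse_const K / a"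
  have "\<exists>P. degree P \<le> 3 \<and> (\<forall>s. F s t = poly P s)" for t
    using trilinear_along_line[OF tri, of "q + t *\<^sub>R v" u] by (simp add: F_def algebra_simps)
  moreover have "\<exists>P. degree P \<le> 3 \<and> (\<forall>t. F s t = poly P t)" for s
    using trilinear_along_line[OF tri, of "q + s *\<^sub>R u" v] by (simp add: F_def algebra_simps)
  moreover have "continuous_on UNIV (\<lambda>z. F (fst z) (snd z))"
    unfolding F_def by (rule continuous_on_compose2[OF continuous_on_trilinear[OF tri]])
      (auto intro!: continuous_intros)
  ultimately have "ennreal ((F s0 t0)^2) \<le> ennreal c * ennreal c *
      (\<integral>\<^sup>+ z. ennreal (indicator ({ls..ls+a} \<times> {lt..lt+a}) z * (F (fst z) (snd z))^2) \<partial>lborel)"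
    unfolding c_def by (rule separately_cubic_sq_le_square_nn_integral[OF _ _ _ a s0 t0])
  also have "\<dots> \<le> ennreal c * ennreal c * I"
    unfolding I_def F_def using square
    by (intro mult_left_mono nn_integral_mono) (auto simp: indicator_def)
  \<comment> \<open>finiteness matters: plane_L2_norm goes through enn2real, which sends \<infinity> to 0\<close>
  also have "I = ennreal (enn2real I)"
    using plane_nn_integral_finite[OF A continuous_on_trilinear[OF tri] uv] by (simp add: I_def)
  finally have "(F s0 t0)^2 \<le> c^2 * enn2real I"
    using a cubic_inverse_const_pos[of K] by (simp add: c_def power2_eq_square ennreal_mult'[symmetric])
  then have "sqrt ((F s0 t0)^2) \<le> sqrt (c^2 * enn2real I)"
    by (rule real_sqrt_le_mono)
  then show ?thesis
    using a cubic_inverse_const_pos[of K] by (simp add: real_sqrt_mult c_def F_def plane_L2_norm_def I_def)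
qed

lemma face_of_contains_symmetric_points:
  assumes "E face_of S" "x \<in> E" "x - d \<in> S" "x + d \<in> S" "d \<noteq> 0"
  shows "x + d \<in> E"
proof -
  have "x = midpoint (x - d) (x + d)"
    by (simp add: midpoint_def algebra_simps flip: scaleR_add_left)
  moreover have "x - d \<noteq> x + d"
    using \<open>d \<noteq> 0\<close> by (simp add: algebra_simps) (metis scaleR_2 scaleR_eq_0_iff zero_neq_numeral)
  ultimately have "x \<in> open_segment (x - d) (x + d)"
    by (metis midpoint_in_open_segment)
  then show ?thesis
    using assms unfolding face_of_def by blast
qed

lemma edge_of_box_coords:
  fixes lo hi :: "real^3"
  assumes E: "E \<in> edges (cbox lo hi)" and P: "P \<in> E"
  shows "\<exists>k. \<forall>j. j \<noteq> k \<longrightarrow> P$j = lo$j \<or> P$j = hi$j"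
proof (rule ccontr)
  assume "\<not> ?thesis"
  then have off_bounds: "\<exists>j. j \<noteq> k \<and> P$j \<noteq> lo$j \<and> P$j \<noteq> hi$j" for k
    by blast
  obtain i1 where "P$i1 \<noteq> lo$i1 \<and> P$i1 \<noteq> hi$i1"
    using off_bounds by blast
  moreover obtain i2 where "i2 \<noteq> i1" "P$i2 \<noteq> lo$i2 \<and> P$i2 \<noteq> hi$i2"
    using off_bounds by blast
  ultimately have interior: "P$i \<noteq> lo$i \<and> P$i \<noteq> hi$i" if "i \<in> {i1, i2}" for i
    using that by blast
  have face: "E face_of cbox lo hi" and "aff_dim E = 1"
    using E unfolding edges_def by auto
  have "P \<in> cbox lo hi"
    using face P face_of_imp_subset by blast
  then have strict: "lo$i < P$i \<and> P$i < hi$i" if "i \<in> {i1, i2}" for i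
    using interior[OF that] unfolding mem_box_cart by (metis order.not_eq_order_implies_strict)
  define \<epsilon> where "\<epsilon> = Min {P$i1 - lo$i1, hi$i1 - P$i1, P$i2 - lo$i2, hi$i2 - P$i2}"
  have "0 < \<epsilon>"
    using strict by (simp add: \<epsilon>_def)
  have step_in_E: "P + \<epsilon> *\<^sub>R axis i 1 \<in> E" if "i \<in> {i1, i2}" for i
  proof (rule face_of_contains_symmetric_points[OF face P])
    have "lo$i \<le> P$i - \<epsilon>" "P$i + \<epsilon> \<le> hi$i"
      using that by (auto simp: \<epsilon>_def)
    then show "P - \<epsilon> *\<^sub>R axis i 1 \<in> cbox lo hi" "P + \<epsilon> *\<^sub>R axis i 1 \<in> cbox lo hi"
      using \<open>P \<in> cbox lo hi\<close> \<open>0 < \<epsilon>\<close> unfolding mem_box_cart by (auto simp: axis_def)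
    show "\<epsilon> *\<^sub>R axis i 1 \<noteq> (0 :: real^3)"
      using \<open>0 < \<epsilon>\<close> by simp
  qed
  have "collinear E"
    using \<open>aff_dim E = 1\<close> by (simp add: collinear_aff_dim)
  then obtain w where w: "\<And>x y. x \<in> E \<Longrightarrow> y \<in> E \<Longrightarrow> \<exists>c. x - y = c *\<^sub>R w"
    unfolding collinear_def by blast
  obtain c1 c2 where c1: "\<epsilon> *\<^sub>R axis i1 1 = c1 *\<^sub>R w" and c2: "\<epsilon> *\<^sub>R axis i2 1 = c2 *\<^sub>R w"
    using w[OF step_in_E[of i1] P] w[OF step_in_E[of i2] P] by auto
  have "\<epsilon> = c1 * w$i1" "0 = c1 * w$i2" "\<epsilon> = c2 * w$i2"
    using arg_cong[OF c1, of "\<lambda>x. x$i1"] arg_cong[OF c1, of "\<lambda>x. x$i2"] arg_cong[OF c2, of "\<lambda>x. x$i2"]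
      \<open>i2 \<noteq> i1\<close> by (simp_all add: axis_def)
  then show False
    using \<open>0 < \<epsilon>\<close> by auto
qed

definition lattice_cube :: "real^3 \<Rightarrow> real \<Rightarrow> int^3 \<Rightarrow> (real^3) set" where
  "lattice_cube a h k = cbox (a + h *\<^sub>R (\<chi> i. of_int (k$i))) (a + h *\<^sub>R (\<chi> i. of_int (k$i) + 1))"

lemma mem_lattice_cube:
  "x \<in> lattice_cube a h k \<longleftrightarrow> (\<forall>i. a$i + h * of_int (k$i) \<le> x$i \<and> x$i \<le> a$i + h * of_int (k$i) + h)"
  unfolding lattice_cube_def mem_box_cart by (simp add: distrib_left add.assoc)

lemma lattice_cube_component_dist:
  assumes "x \<in> lattice_cube a h k" "y \<in> lattice_cube a h k"
  shows "\<bar>x$i - y$i\<bar> \<le> h"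
proof -
  have "a$i + h * of_int (k$i) \<le> x$i \<and> x$i \<le> a$i + h * of_int (k$i) + h"
    "a$i + h * of_int (k$i) \<le> y$i \<and> y$i \<le> a$i + h * of_int (k$i) + h"
    using assms unfolding mem_lattice_cube by blast+
  then show ?thesis
    unfolding abs_le_iff by linarith
qed

lemma lattice_index_unique:
  fixes m n :: int and b h y :: real
  assumes "0 < h" "b + h * of_int n < y" "y < b + h * of_int n + h"
    and "b + h * of_int m \<le> y" "y \<le> b + h * of_int m + h"
  shows "m = n"
proof -
  have "h * of_int m < h * of_int (n + 1)" "h * of_int n < h * of_int (m + 1)"
    using assms by (simp_all add: distrib_left)
  then have "m < n + 1" "n < m + 1"
    using \<open>0 < h\<close> by (simp_all add: mult_less_cancel_left_pos)
  then show ?thesis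
    by linarith
qed

lemma common_lattice_cell:
  fixes b h x y :: real and m :: int
  assumes "0 < h" "y = b + h * of_int m" "\<bar>x - y\<bar> \<le> h"
  shows "\<exists>n::int. b + h * of_int n \<le> y \<and> y \<le> b + h * of_int n + h
    \<and> b + h * of_int n \<le> x \<and> x \<le> b + h * of_int n + h"
proof (cases "y \<le> x")
  case True
  then show ?thesis
    using assms by (intro exI[of _ m]) auto
next
  case False
  then show ?thesis
    using assms by (intro exI[of _ "m - 1"]) (auto simp: algebra_simps)
qed

lemma one_sided_interval:
  fixes x r c :: real
  assumes "0 \<le> r"
  obtains l where "\<bar>x - l\<bar> \<le> r" "\<And>s. s \<in> {l..l+r} \<Longrightarrow> \<bar>s - x\<bar> \<le> r \<and> 0 \<le> c * (s - x)"
proof (cases "0 \<le> c")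
  case True
  then show ?thesis
    using assms by (intro that[of x]) auto
next
  case False
  then show ?thesis
    using assms by (intro that[of "x - r"]) (auto simp: mult_nonpos_nonpos)
qed

lemma move_toward_centre:
  fixes L h p z :: real
  assumes "L \<le> p" "p \<le> L + h" "\<bar>z - p\<bar> \<le> h/2" "0 \<le> (L + h/2 - p) * (z - p)"
  shows "L \<le> z \<and> z \<le> L + h"
  using assms by (cases "p \<le> L + h/2") (auto simp: zero_le_mult_iff)

lemma component_combination_le:
  fixes u v :: "real^3"
  assumes "norm u = 1" "norm v = 1"
  shows "\<bar>(x *\<^sub>R u + y *\<^sub>R v)$j\<bar> \<le> \<bar>x\<bar> + \<bar>y\<bar>"
proof -
  have "\<bar>u$j\<bar> \<le> 1" "\<bar>v$j\<bar> \<le> 1"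
    using assms component_le_norm_cart by metis+
  then have "\<bar>x * u$j\<bar> \<le> \<bar>x\<bar>" "\<bar>y * v$j\<bar> \<le> \<bar>y\<bar>"
    by (simp_all add: abs_mult mult_left_le)
  then show ?thesis
    by simp
qed

lemma norm_le_of_components_le:
  fixes x :: "real^3"
  assumes "\<And>i. \<bar>x$i\<bar> \<le> r"
  shows "norm x \<le> 3 * r"
proof -
  have "norm x \<le> (\<Sum>i\<in>UNIV. \<bar>x$i\<bar>)"
    by (rule norm_le_l1_cart)
  also have "\<dots> \<le> of_nat CARD(3) * r"
    using assms by (intro sum_bounded_above) auto
  finally show ?thesis
    by simp
qed

locale lattice_mesh =
  fixes \<Omega> :: "(real^3) set" and h :: real and \<T> :: "(real^3) set set" and a :: "real^3"
  assumes open_domain: "open \<Omega>"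
    and h_pos: "0 < h"
    and mesh_cover: "\<Union>\<T> = closure \<Omega>"
    and mesh_cubes: "\<And>T. T \<in> \<T> \<Longrightarrow> \<exists>k. T = lattice_cube a h k"

lemma cartesian_mesh_lattice_mesh:
  assumes "open \<Omega>" "cartesian_mesh \<Omega> h \<T>"
  obtains a where "lattice_mesh \<Omega> h \<T> a"
  using assms unfolding cartesian_mesh_def lattice_mesh_def lattice_cube_def by metis

context lattice_mesh
begin

lemma lattice_cube_in_mesh:
  assumes "P \<in> \<Omega>" "P \<in> lattice_cube a h k"
  shows "lattice_cube a h k \<in> \<T>"
proof -
  define c :: "real^3" where "c = a + h *\<^sub>R (\<chi> i. of_int (k$i) + 1/2)"
  let ?lo = "a + h *\<^sub>R (\<chi> i. of_int (k$i))" and ?hi = "a + h *\<^sub>R (\<chi> i. of_int (k$i) + 1)"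
  have "c \<in> box ?lo ?hi"
    unfolding mem_box_cart c_def using h_pos by simp
  then have "box ?lo ?hi \<noteq> {}"
    by blast
  then have "P \<in> closure (box ?lo ?hi)"
    using assms(2) by (simp add: lattice_cube_def)
  moreover obtain e where "0 < e" "ball P e \<subseteq> \<Omega>"
    using open_domain assms(1) open_contains_ball by blast
  ultimately obtain y where y: "y \<in> box ?lo ?hi" "y \<in> \<Omega>"
    unfolding closure_approachable by (metis dist_commute mem_ball subsetD)
  then obtain T where "T \<in> \<T>" "y \<in> T"
    using mesh_cover closure_subset by blast
  moreover obtain k' where k': "T = lattice_cube a h k'"
    using mesh_cubes \<open>T \<in> \<T>\<close> by blast
  ultimately have "a$i + h * of_int (k'$i) \<le> y$i \<and> y$i \<le> a$i + h * of_int (k'$i) + h" for i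
    by (simp add: mem_lattice_cube)
  moreover have "a$i + h * of_int (k$i) < y$i \<and> y$i < a$i + h * of_int (k$i) + h" for i
    using y(1) unfolding mem_box_cart by (simp add: distrib_left add.assoc)
  ultimately have "k' = k"
    using h_pos lattice_index_unique by (meson vec_eq_iff)
  then show ?thesis
    using \<open>T \<in> \<T>\<close> k' by simp
qed

lemma omega_component_dist:
  assumes "T \<in> \<T>" "P \<in> T" "z \<in> omega \<T> T"
  shows "\<bar>z$i - P$i\<bar> \<le> 2 * h"
proof -
  obtain T' x where "T' \<in> \<T>" "z \<in> T'" "x \<in> T'" "x \<in> T"
    using assms(3) unfolding omega_def by blast
  then have "\<bar>z$i - x$i\<bar> \<le> h" "\<bar>x$i - P$i\<bar> \<le> h"
    using mesh_cubes assms(1,2) lattice_cube_component_dist by metis+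
  then show ?thesis
    by linarith
qed

lemma mem_omega_near_edge_point:
  assumes T: "T = lattice_cube a h k0" and P: "P \<in> \<Omega>" "P \<in> T"
    and lattice: "\<And>j. j \<noteq> k \<Longrightarrow> \<exists>m::int. P$j = a$j + h * of_int m"
    and near: "\<And>j. j \<noteq> k \<Longrightarrow> \<bar>z$j - P$j\<bar> \<le> h"
    and slab: "a$k + h * of_int (k0$k) \<le> z$k" "z$k \<le> a$k + h * of_int (k0$k) + h"
  shows "z \<in> omega \<T> T"
proof -
  have "\<exists>n::int. a$j + h * of_int n \<le> P$j \<and> P$j \<le> a$j + h * of_int n + h
      \<and> a$j + h * of_int n \<le> z$j \<and> z$j \<le> a$j + h * of_int n + h" for j
  proof (cases "j = k")
    case True
    then show ?thesis
      using P(2) slab unfolding T mem_lattice_cube by blast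
  next
    case False
    then obtain m where "P$j = a$j + h * of_int m"
      using lattice by blast
    from common_lattice_cell[OF h_pos this near[OF False]] show ?thesis .
  qed
  then obtain n where n: "\<And>j. a$j + h * of_int (n j) \<le> P$j \<and> P$j \<le> a$j + h * of_int (n j) + h
      \<and> a$j + h * of_int (n j) \<le> z$j \<and> z$j \<le> a$j + h * of_int (n j) + h"
    by metis
  have "P \<in> lattice_cube a h (\<chi> j. n j)" "z \<in> lattice_cube a h (\<chi> j. n j)"
    using n by (simp_all add: mem_lattice_cube)
  then show ?thesis
    using lattice_cube_in_mesh[OF P(1)] P(2) unfolding omega_def by blast
qed

lemma square_in_omega:
  assumes T: "T \<in> \<T>" and P: "P \<in> \<Omega>" and E: "E \<in> edges T" "P \<in> E"
    and P_plane: "P = q + sP *\<^sub>R u + tP *\<^sub>R v" and uv: "norm u = 1" "norm v = 1"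
  obtains ls lt where "\<bar>sP - ls\<bar> \<le> h/4" "\<bar>tP - lt\<bar> \<le> h/4"
    "\<And>s t. s \<in> {ls..ls + h/4} \<Longrightarrow> t \<in> {lt..lt + h/4} \<Longrightarrow> q + s *\<^sub>R u + t *\<^sub>R v \<in> omega \<T> T"
proof -
  obtain k0 where k0: "T = lattice_cube a h k0"
    using mesh_cubes T by blast
  have "P \<in> T"
    using E unfolding edges_def by (blast dest: face_of_imp_subset)
  obtain k where "\<forall>j. j \<noteq> k \<longrightarrow> P$j = a$j + h * of_int (k0$j) \<or> P$j = a$j + h * of_int (k0$j + 1)"
    using edge_of_box_coords[OF E[unfolded k0 lattice_cube_def]] by (auto simp: distrib_left)
  then have lattice: "\<exists>m::int. P$j = a$j + h * of_int m" if "j \<noteq> k" for j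
    using that by blast
  define L where "L = a$k + h * of_int (k0$k)"
  have "L \<le> P$k" "P$k \<le> L + h"
    using \<open>P \<in> T\<close> unfolding k0 mem_lattice_cube L_def by blast+
  \<comment> \<open>the sides of the square are oriented so that the k-th coordinate moves towards L + h/2\<close>
  define c where "c = L + h/2 - P$k"
  have "0 \<le> h/4"
    using h_pos by simp
  obtain ls where ls: "\<bar>sP - ls\<bar> \<le> h/4"
    "\<And>s. s \<in> {ls..ls + h/4} \<Longrightarrow> \<bar>s - sP\<bar> \<le> h/4 \<and> 0 \<le> (c * u$k) * (s - sP)"
    using one_sided_interval[OF \<open>0 \<le> h/4\<close>] by metis
  obtain lt where lt: "\<bar>tP - lt\<bar> \<le> h/4"
    "\<And>t. t \<in> {lt..lt + h/4} \<Longrightarrow> \<bar>t - tP\<bar> \<le> h/4 \<and> 0 \<le> (c * v$k) * (t - tP)"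
    using one_sided_interval[OF \<open>0 \<le> h/4\<close>] by metis
  have "q + s *\<^sub>R u + t *\<^sub>R v \<in> omega \<T> T" if st: "s \<in> {ls..ls + h/4}" "t \<in> {lt..lt + h/4}" for s t
  proof -
    define z where "z = q + s *\<^sub>R u + t *\<^sub>R v"
    have z_P: "z - P = (s - sP) *\<^sub>R u + (t - tP) *\<^sub>R v"
      unfolding z_def P_plane by (simp add: algebra_simps)
    have near: "\<bar>z$j - P$j\<bar> \<le> h/2" for j
      using component_combination_le[OF uv, of "s - sP" "t - tP" j] ls(2)[OF st(1)] lt(2)[OF st(2)]
      unfolding z_P[symmetric] by simp
    have zk: "z$k - P$k = (s - sP) * u$k + (t - tP) * v$k"
      using arg_cong[OF z_P, of "\<lambda>x. x$k"] by simp
    have "c * (z$k - P$k) = (c * u$k) * (s - sP) + (c * v$k) * (t - tP)"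
      by (subst zk) (simp add: algebra_simps)
    then have "0 \<le> (L + h/2 - P$k) * (z$k - P$k)"
      using ls(2)[OF st(1)] lt(2)[OF st(2)] by (simp add: c_def)
    then have "L \<le> z$k \<and> z$k \<le> L + h"
      using move_toward_centre \<open>L \<le> P$k\<close> \<open>P$k \<le> L + h\<close> near by blast
    moreover have "\<bar>z$j - P$j\<bar> \<le> h" for j
      using near[of j] h_pos by linarith
    ultimately show ?thesis
      unfolding z_def[symmetric]
      by (intro mem_omega_near_edge_point[OF k0 P \<open>P \<in> T\<close> lattice]) (auto simp: L_def)
  qed
  then show ?thesis
    using that ls(1) lt(1) by blast
qed


lemma trilinear_abs_le_omega_plane_L2_norm:
  assumes T: "T \<in> \<T>" and P: "P \<in> \<Omega>" "E \<in> edges T" "P \<in> E" and p: "trilinear p"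
    and H: "H = {q + s *\<^sub>R u + t *\<^sub>R v | s t. True}" and "P \<in> H" and X0: "X0 \<in> omega \<T> T \<inter> H"
    and uv: "norm u = 1" "norm v = 1" "u \<bullet> v = 0"
  shows "\<bar>p X0\<bar> \<le> 4 * cubic_inverse_const 25 / h * plane_L2_norm (omega \<T> T \<inter> H) p q u v"
proof -
  obtain sP tP where P_plane: "P = q + sP *\<^sub>R u + tP *\<^sub>R v"
    using \<open>P \<in> H\<close> H by blast
  obtain s0 t0 where X0_plane: "X0 = q + s0 *\<^sub>R u + t0 *\<^sub>R v"
    using X0 H by blast
  obtain ls lt where ls: "\<bar>sP - ls\<bar> \<le> h/4" and lt: "\<bar>tP - lt\<bar> \<le> h/4"
    and square: "\<And>s t. s \<in> {ls..ls + h/4} \<Longrightarrow> t \<in> {lt..lt + h/4} \<Longrightarrow> q + s *\<^sub>R u + t *\<^sub>R v \<in> omega \<T> T"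
    using square_in_omega[OF T P P_plane uv(1,2)] by blast
  have "P \<in> T"
    using P unfolding edges_def by (blast dest: face_of_imp_subset)
  have omega_near_P: "norm (z - P) \<le> 6 * h" if "z \<in> omega \<T> T" for z
    using norm_le_of_components_le[of "z - P" "2 * h"] omega_component_dist[OF T \<open>P \<in> T\<close> that] by simp
  have inner_bound: "\<bar>(X0 - P) \<bullet> w\<bar> \<le> 6 * h" if "norm w = 1" for w
    using Cauchy_Schwarz_ineq2[of "X0 - P" w] omega_near_P[OF IntD1[OF X0]] that by simp
  have "(X0 - P) \<bullet> u = s0 - sP" "(X0 - P) \<bullet> v = t0 - tP"
    using orthonormal_coords[OF uv, of "s0 - sP" "t0 - tP"] unfolding X0_plane P_plane
    by (simp_all add: algebra_simps)
  then have "\<bar>s0 - sP\<bar> \<le> 6 * h" "\<bar>t0 - tP\<bar> \<le> 6 * h"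
    using inner_bound[OF uv(1)] inner_bound[OF uv(2)] by simp_all
  then have s0: "\<bar>s0 - ls\<bar> \<le> 25 * (h/4)" and t0: "\<bar>t0 - lt\<bar> \<le> 25 * (h/4)"
    using ls lt by linarith+
  have "omega \<T> T \<inter> H \<subseteq> cball P (6 * h)"
    using omega_near_P by (auto simp: dist_norm norm_minus_commute)
  then have bounded: "bounded (omega \<T> T \<inter> H)"
    by (rule bounded_subset[OF bounded_cball])
  have square_in_H: "q + s *\<^sub>R u + t *\<^sub>R v \<in> omega \<T> T \<inter> H"
    if "s \<in> {ls..ls + h/4}" "t \<in> {lt..lt + h/4}" for s t
    using square[OF that] H by blast
  have "0 < h/4"
    using h_pos by simp
  from trilinear_abs_le_plane_L2_norm[OF p this bounded uv s0 t0 square_in_H]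
  show ?thesis
    unfolding X0_plane by (simp add: field_simps)
qed

end

theorem lemma4p2:
  fixes \<Omega> :: "(real^3) set"
  assumes "open \<Omega>" and "connected \<Omega>" and "bounded \<Omega>"
    and "\<exists>B. finite B \<and> \<Omega> = interior (\<Union>(a,b)\<in>B. cbox a b)"
  shows "\<exists>C. \<forall>\<Gamma> h \<T>.
     closed_C2_surface \<Gamma> \<and> \<Gamma> \<subseteq> \<Omega> \<and>
     (\<exists>\<Omega>p \<Omega>m. open \<Omega>p \<and> open \<Omega>m \<and> \<Omega>p \<noteq> {} \<and> \<Omega>m \<noteq> {} \<and> \<Omega>p \<inter> \<Omega>m = {} \<and>
        \<Omega> - \<Gamma> = \<Omega>p \<union> \<Omega>m) \<and>
     cartesian_mesh \<Omega> h \<T> \<and> h < reach \<Gamma> / (3 * sqrt 3) \<and>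
     (\<forall>T\<in>\<T>. \<forall>E\<in>edges T. \<forall>x y. x \<in> \<Gamma> \<inter> E \<and> y \<in> \<Gamma> \<inter> E \<longrightarrow> x = y) \<and>
     (\<forall>T\<in>\<T>. \<forall>F\<in>faces T. finite (\<Gamma> \<inter> rel_frontier F) \<and> card (\<Gamma> \<inter> rel_frontier F) \<le> 2) \<and>
     (\<forall>T\<in>\<T>. verts T \<inter> \<Gamma> = {})
     \<longrightarrow> (\<forall>T\<in>\<T>. T \<inter> \<Gamma> \<noteq> {} \<longrightarrow>
           (\<forall>S p X0 q u v. tau_selection \<Gamma> T S \<and> trilinear p \<and>
              X0 \<in> omega \<T> T \<inter> affine hull S \<and>
              norm u = 1 \<and> norm v = 1 \<and> u \<bullet> v = 0 \<and>
              affine hull S = {q + s *\<^sub>R u + t *\<^sub>R v | s t. True}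
              \<longrightarrow> \<bar>p X0\<bar> \<le> C / h * plane_L2_norm (omega \<T> T \<inter> affine hull S) p q u v))"
proof -
  \<comment> \<open>only open \<Omega>, \<Gamma> \<subseteq> \<Omega> and the points of S lying on \<Gamma> and on edges of T are used\<close>
  have bound: "\<bar>p X0\<bar> \<le> 4 * cubic_inverse_const 25 / h * plane_L2_norm (omega \<T> T \<inter> affine hull S) p q u v"
    if hyps: "\<Gamma> \<subseteq> \<Omega>" "cartesian_mesh \<Omega> h \<T>" "T \<in> \<T>" "tau_selection \<Gamma> T S" "trilinear p"
      "X0 \<in> omega \<T> T \<inter> affine hull S" "norm u = 1" "norm v = 1" "u \<bullet> v = 0"
      "affine hull S = {q + s *\<^sub>R u + t *\<^sub>R v | s t. True}"
    for \<Gamma> h \<T> T S p X0 q u v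
  proof -
    obtain a where "lattice_mesh \<Omega> h \<T> a"
      using cartesian_mesh_lattice_mesh[OF assms(1) hyps(2)] .
    then interpret lattice_mesh \<Omega> h \<T> a .
    have "S \<subseteq> cut_pts \<Gamma> T" "card S = 3"
      using hyps(4) unfolding tau_selection_def by simp_all
    then obtain P where "P \<in> S"
      by fastforce
    then obtain E where "P \<in> \<Gamma>" "E \<in> edges T" "P \<in> E"
      using \<open>S \<subseteq> cut_pts \<Gamma> T\<close> unfolding cut_pts_def by blast
    moreover have "P \<in> affine hull S"
      using \<open>P \<in> S\<close> by (rule hull_inc)
    moreover have "P \<in> \<Omega>"
      using \<open>P \<in> \<Gamma>\<close> hyps(1) by blast
    ultimately show ?thesis
      using trilinear_abs_le_omega_plane_L2_norm[OF hyps(3) _ _ _ hyps(5,10) _ hyps(6-9)] by blast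
  qed
  show ?thesis
    by (intro exI[of _ "4 * cubic_inverse_const 25"] allI impI ballI, elim conjE) (rule bound; assumption)
qed

end
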